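(* Let $S=k[x_1,\dots,x_n]$ be a polynomial ring over a field $k$, let $I$ be a nonzero proper ideal generated by square-free monomials, and let $c=\operatorname{codim}(I)$. Then $x_1x_2\cdots x_n\in I^{(c)}$. Consequently, if $I^{(c)}=I^c$, then $I$ contains $c$ monomials with pairwise disjoint supports (i.e., a regular sequence consisting of $c$ monomials).
   Context: A square-free monomial ideal $I$ can be written as $I=\mathfrak p_1\cap\cdots\cap\mathfrak p_s$, where each $\mathfrak p_i$ is a prime ideal generated by a subset of the variables. For a prime $\mathfrak p$, the $m$-th symbolic power is $\mathfrak p^{(m)}=\mathfrak p^mS_{\mathfrak p}\cap S$, and for $I=\mathfrak p_1\cap\cdots\cap\mathfrak p_s$ (irredundant intersection of primes) one sets $I^{(m)}=\mathfrak p_1^{(m)}\cap\cdots\cap\mathfrak p_s^{(m)}$; for primes generated by variables, $\mathfrak p^{(m)}=\mathfrak p^m$. The support of a monomial is the set of variables dividing it. *)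

theory Defs
  imports Main
begin

text \<open>Combinatorial model of monomial ideals in S = k[x_0,...,x_(n-1)].
  A monomial is an exponent vector u :: nat \<Rightarrow> nat vanishing outside {..<n}.
  A monomial ideal is determined by the monomials it contains.  A square-free
  monomial is identified with its support (a subset of {..<n}); a square-free
  monomial ideal is given by a set G of such supports (its generators).\<close>

definition monomial :: "nat \<Rightarrow> (nat \<Rightarrow> nat) \<Rightarrow> bool" where
  "monomial n u \<longleftrightarrow> (\<forall>i. n \<le> i \<longrightarrow> u i = 0)"

definition supp :: "(nat \<Rightarrow> nat) \<Rightarrow> nat set" where
  "supp u = {i. u i \<noteq> 0}"

text \<open>Monomials of the ideal generated by the square-free monomials x_g = prod_{i in g} x_i, g in G.\<close>
definition mon_ideal :: "nat \<Rightarrow> nat set set \<Rightarrow> (nat \<Rightarrow> nat) set" where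
  "mon_ideal n G = {u. monomial n u \<and> (\<exists>g\<in>G. \<forall>i\<in>g. 1 \<le> u i)}"

text \<open>Monomials of the ordinary power I^m: divisible by a product of m generators.\<close>
definition mon_power :: "nat \<Rightarrow> nat set set \<Rightarrow> nat \<Rightarrow> (nat \<Rightarrow> nat) set" where
  "mon_power n G m = {u. monomial n u \<and>
      (\<exists>f. (\<forall>j<m. f j \<in> G) \<and> (\<forall>i. card {j. j < m \<and> i \<in> f j} \<le> u i))}"

text \<open>A prime generated by the variables in P contains I iff P meets every generator.\<close>
definition prime_contains :: "nat \<Rightarrow> nat set set \<Rightarrow> nat set \<Rightarrow> bool" where
  "prime_contains n G P \<longleftrightarrow> P \<subseteq> {..<n} \<and> (\<forall>g\<in>G. g \<inter> P \<noteq> {})"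

definition minimal_primes :: "nat \<Rightarrow> nat set set \<Rightarrow> nat set set" where
  "minimal_primes n G = {P. prime_contains n G P \<and> (\<forall>Q. Q \<subset> P \<longrightarrow> \<not> prime_contains n G Q)}"

text \<open>codim I = minimal height of a minimal prime; height of (x_i : i in P) is |P|.\<close>
definition codim :: "nat \<Rightarrow> nat set set \<Rightarrow> nat" where
  "codim n G = Min (card ` minimal_primes n G)"

text \<open>Monomials of the symbolic power I^(m) = \<Inter> p_i^m; a monomial u lies in p^m
  for p = (x_i : i in P) iff sum_{i in P} u_i \<ge> m.\<close>
definition symb_power :: "nat \<Rightarrow> nat set set \<Rightarrow> nat \<Rightarrow> (nat \<Rightarrow> nat) set" where
  "symb_power n G m = {u. monomial n u \<and> (\<forall>P\<in>minimal_primes n G. m \<le> (\<Sum>i\<in>P. u i))}"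

end

theory Submission
  imports Defs
begin

text \<open>Every minimal prime of I has height at least c = codim I, so the product of all
  variables has degree at least c in each of them and thus lies in I^(c).  If it lies
  in I^c, it is divisible by a product of c square-free generators; as it is itself
  square-free, no variable divides two of these factors, so their supports are
  pairwise disjoint.\<close>

lemma finite_minimal_primes: "finite (minimal_primes n G)"
proof (rule finite_subset)
  show "minimal_primes n G \<subseteq> Pow {..<n}"
    by (auto simp: minimal_primes_def prime_contains_def)
qed simp

lemma codim_le_card_minimal_prime:
  assumes "P \<in> minimal_primes n G"
  shows "codim n G \<le> card P"
  unfolding codim_def using finite_minimal_primes assms by (intro Min_le) auto

lemma product_of_variables_in_symb_power:
  assumes "m \<le> codim n G"
  shows "(\<lambda>i. if i < n then 1 else 0) \<in> symb_power n G m"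
  unfolding symb_power_def
proof (intro CollectI conjI ballI)
  show "monomial n (\<lambda>i. if i < n then 1 else 0)"
    by (simp add: monomial_def)
  fix P assume P: "P \<in> minimal_primes n G"
  then have "P \<subseteq> {..<n}"
    by (simp add: minimal_primes_def prime_contains_def)
  then have "(\<Sum>i\<in>P. if i < n then 1 else 0) = card P"
    by (simp add: subset_iff)
  then show "m \<le> (\<Sum>i\<in>P. if i < n then 1 else 0)"
    using assms codim_le_card_minimal_prime[OF P] by simp
qed

lemma squarefree_mon_power_disjoint_generators:
  assumes "u \<in> mon_power n G m" and squarefree: "\<forall>i. u i \<le> 1"
  obtains f where "\<forall>j<m. f j \<in> G"
    and "\<forall>j<m. \<forall>j'<m. j \<noteq> j' \<longrightarrow> f j \<inter> f j' = {}"
proof -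
  obtain f where f: "\<forall>j<m. f j \<in> G"
    and mult: "\<forall>i. card {j. j < m \<and> i \<in> f j} \<le> u i"
    using assms(1) unfolding mon_power_def by blast
  have "f j \<inter> f j' = {}" if "j < m" "j' < m" "j \<noteq> j'" for j j'
  proof (rule ccontr)
    assume "f j \<inter> f j' \<noteq> {}"
    then obtain i where "i \<in> f j" "i \<in> f j'" by blast
    then have "card {j, j'} \<le> card {k. k < m \<and> i \<in> f k}"
      using that by (intro card_mono) auto
    also have "\<dots> \<le> 1"
      using mult squarefree order_trans by blast
    finally show False using \<open>j \<noteq> j'\<close> by simp
  qed
  with f that show thesis by blast
qed

lemma generator_in_mon_ideal:
  assumes "g \<in> G" and "g \<subseteq> {..<n}"
  shows "(\<lambda>i. of_bool (i \<in> g)) \<in> mon_ideal n G"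
  using assms by (auto simp: mon_ideal_def monomial_def)

lemma supp_of_bool: "supp (\<lambda>i. of_bool (i \<in> g)) = g"
  by (simp add: supp_def)

theorem mainTheorem7:
  fixes n :: nat and G :: "nat set set"
  assumes gens: "\<forall>g\<in>G. g \<subseteq> {..<n}"
    and nonzero: "G \<noteq> {}"
    and proper: "{} \<notin> G"
  shows "((\<lambda>i. if i < n then 1 else 0) \<in> symb_power n G (codim n G)) \<and>
         (symb_power n G (codim n G) = mon_power n G (codim n G) \<longrightarrow>
         (\<exists>u. (\<forall>j < codim n G. u j \<in> mon_ideal n G) \<and>
             (\<forall>j < codim n G. \<forall>j' < codim n G. j \<noteq> j' \<longrightarrow> supp (u j) \<inter> supp (u j') = {})))"
proof (intro conjI impI)
  let ?c = "codim n G"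
  show in_symb: "(\<lambda>i. if i < n then 1 else 0) \<in> symb_power n G ?c"
    by (rule product_of_variables_in_symb_power) simp
  assume "symb_power n G ?c = mon_power n G ?c"
  with in_symb have "(\<lambda>i. if i < n then 1 else 0) \<in> mon_power n G ?c"
    by simp
  then obtain f where f: "\<forall>j<?c. f j \<in> G"
    and disjoint: "\<forall>j<?c. \<forall>j'<?c. j \<noteq> j' \<longrightarrow> f j \<inter> f j' = {}"
    by (rule squarefree_mon_power_disjoint_generators) simp
  show "\<exists>u. (\<forall>j < ?c. u j \<in> mon_ideal n G) \<and>
      (\<forall>j < ?c. \<forall>j' < ?c. j \<noteq> j' \<longrightarrow> supp (u j) \<inter> supp (u j') = {})"
  proof (intro exI[of _ "\<lambda>j i. of_bool (i \<in> f j)"] conjI allI impI)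
    fix j assume "j < ?c"
    with f gens show "(\<lambda>i. of_bool (i \<in> f j)) \<in> mon_ideal n G"
      by (intro generator_in_mon_ideal) auto
  next
    fix j j' assume "j < ?c" "j' < ?c" "j \<noteq> j'"
    with disjoint show "supp (\<lambda>i. of_bool (i \<in> f j)) \<inter> supp (\<lambda>i. of_bool (i \<in> f j')) = {}"
      by (simp add: supp_of_bool)
  qed
qed

end
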